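(* Let $Q=[u_1,\dots,u_n]\subset\mathbb{S}^2$ with $n\ge 7$ be a spherical polygon not contained in any closed hemisphere, without self-intersections and antipodal intersections, with exactly two essential vertices $u_i,u_j$, and let $u_k,u_l$ be nonessential vertices such that $\{u_i,u_j,u_k,u_l\}$ is not contained in any closed hemisphere. Then the spherical convex hull of the set of nonessential vertices of $Q$ is contained in the union of the spherical triangles $\triangle(\overline u_i,\overline u_j,\overline u_k)$ and $\triangle(\overline u_i,\overline u_j,\overline u_l)$. In particular, this convex hull does not contain $\overline u_i$ nor $\overline u_j$.
   Context: A spherical polygon has edges the minimal great-circle arcs between consecutive vertices; no three vertices lie on a common great circle. A set is balanced if not contained in any closed hemisphere; for balanced $Q$, $u_m$ is essential if the vertex set minus $u_m$ is not balanced, nonessential otherwise. Self-intersection: two non-adjacent edges intersect; antipodal intersection: non-adjacent edges $e,f$ with $e\cap(-f)\neq\emptyset$. $\overline u=-u$. *)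

theory Defs
  imports "HOL-Analysis.Analysis"
begin

type_synonym pt = "real ^ 3"

definition closed_hemisphere :: "pt \<Rightarrow> pt set" where
  "closed_hemisphere v = {x. norm x = 1 \<and> inner v x \<ge> 0}"

definition in_closed_hemisphere :: "pt set \<Rightarrow> bool" where
  "in_closed_hemisphere S \<longleftrightarrow> (\<exists>v. v \<noteq> 0 \<and> S \<subseteq> closed_hemisphere v)"

definition balanced :: "pt set \<Rightarrow> bool" where
  "balanced S \<longleftrightarrow> \<not> in_closed_hemisphere S"

definition sconv :: "pt set \<Rightarrow> pt set" where
  "sconv S = {x. norm x = 1 \<and> x \<in> cone hull (convex hull S)}"

definition stri :: "pt \<Rightarrow> pt \<Rightarrow> pt \<Rightarrow> pt set" where
  "stri a b c = sconv {a, b, c}"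

text \<open>Minimal great-circle arc between two non-antipodal unit vectors.\<close>
definition arc :: "pt \<Rightarrow> pt \<Rightarrow> pt set" where
  "arc a b = {x. norm x = 1 \<and> (\<exists>s t. s \<ge> 0 \<and> t \<ge> 0 \<and> x = s *\<^sub>R a + t *\<^sub>R b)}"

text \<open>Polygon with n vertices u 0, ..., u (n-1), indices taken cyclically.\<close>
definition vertices :: "nat \<Rightarrow> (nat \<Rightarrow> pt) \<Rightarrow> pt set" where
  "vertices n u = u ` {..<n}"

definition edge :: "nat \<Rightarrow> (nat \<Rightarrow> pt) \<Rightarrow> nat \<Rightarrow> pt set" where
  "edge n u m = arc (u m) (u (Suc m mod n))"

definition adjacent_edges :: "nat \<Rightarrow> nat \<Rightarrow> nat \<Rightarrow> bool" where
  "adjacent_edges n m m' \<longleftrightarrow> m' = Suc m mod n \<or> m = Suc m' mod n"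

definition nonadjacent_edges :: "nat \<Rightarrow> nat \<Rightarrow> nat \<Rightarrow> bool" where
  "nonadjacent_edges n m m' \<longleftrightarrow> m < n \<and> m' < n \<and> m \<noteq> m' \<and> \<not> adjacent_edges n m m'"

text \<open>Spherical polygon: unit vertices, no three on a common great circle.\<close>
definition spherical_polygon :: "nat \<Rightarrow> (nat \<Rightarrow> pt) \<Rightarrow> bool" where
  "spherical_polygon n u \<longleftrightarrow> n \<ge> 3 \<and> (\<forall>m<n. norm (u m) = 1) \<and>
     (\<forall>a<n. \<forall>b<n. \<forall>c<n. a \<noteq> b \<and> a \<noteq> c \<and> b \<noteq> c \<longrightarrow>
        \<not> (\<exists>v. v \<noteq> 0 \<and> inner v (u a) = 0 \<and> inner v (u b) = 0 \<and> inner v (u c) = 0))"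

definition self_intersecting :: "nat \<Rightarrow> (nat \<Rightarrow> pt) \<Rightarrow> bool" where
  "self_intersecting n u \<longleftrightarrow>
     (\<exists>m m'. nonadjacent_edges n m m' \<and> edge n u m \<inter> edge n u m' \<noteq> {})"

definition antipodal_intersecting :: "nat \<Rightarrow> (nat \<Rightarrow> pt) \<Rightarrow> bool" where
  "antipodal_intersecting n u \<longleftrightarrow>
     (\<exists>m m'. nonadjacent_edges n m m' \<and> edge n u m \<inter> uminus ` edge n u m' \<noteq> {})"

definition essential :: "nat \<Rightarrow> (nat \<Rightarrow> pt) \<Rightarrow> nat \<Rightarrow> bool" where
  "essential n u m \<longleftrightarrow> \<not> balanced (vertices n u - {u m})"

definition nonessential_vertices :: "nat \<Rightarrow> (nat \<Rightarrow> pt) \<Rightarrow> pt set" where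
  "nonessential_vertices n u = {u m | m. m < n \<and> \<not> essential n u m}"

end

theory Submission
  imports Defs
begin

text \<open>
  Write \<open>a = u i\<close>, \<open>b = u j\<close>, \<open>c = u k\<close>, \<open>d = u l\<close> and \<open>V\<close> for the vertex set.
  Essentiality of \<open>a\<close> and \<open>b\<close> puts \<open>V - {a}\<close> and \<open>V - {b}\<close> into closed half-spaces,
  and the convex cone of a finite set in general position inside a closed half-space is
  pointed. Hence for \<open>y\<close> in the cone of the nonessential vertices, \<open>-y\<close> lies in neither of
  the cones of \<open>V - {a}\<close> and \<open>V - {b}\<close>; in particular \<open>-a\<close> and \<open>-b\<close> are not in the
  spherical hull. Since \<open>{a, b, c, d}\<close> is balanced, \<open>d = p a + q b + r c\<close> with
  \<open>p, q, r < 0\<close>, so every \<open>y\<close> is a nonnegative combination of \<open>-a, -b, -c, -d\<close> with one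
  coefficient zero. A zero coefficient at \<open>-a\<close> or \<open>-b\<close> would put \<open>-y\<close> into one of the two
  pointed cones, so \<open>y\<close> lies in the triangle \<open>(-a, -b, -c)\<close> or \<open>(-a, -b, -d)\<close>.
\<close>

definition in_general_position :: "'a::euclidean_space set \<Rightarrow> bool" where
  "in_general_position S \<longleftrightarrow> (\<forall>T\<subseteq>S. finite T \<and> card T \<le> DIM('a) \<longrightarrow> independent T)"

lemma in_general_position_subset:
  "in_general_position S \<Longrightarrow> T \<subseteq> S \<Longrightarrow> in_general_position T"
  by (auto simp: in_general_position_def)

lemma sconv_eq_convex_cone_hull: "sconv S = {x. norm x = 1 \<and> x \<in> convex_cone hull S}"
proof -
  have "cone hull X = conic hull X" for X :: "pt set"
    by (metis cone_def conic_def)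
  then show ?thesis
    by (auto simp: sconv_def convex_cone_hull_separate)
qed

lemma convex_cone_hull_finite_nonneg_sum:
  fixes S :: "'a::real_vector set"
  assumes "finite S" and "z \<in> convex_cone hull S"
  obtains c where "\<And>x. x \<in> S \<Longrightarrow> 0 \<le> c x" and "z = (\<Sum>x\<in>S. c x *\<^sub>R x)"
proof -
  define R where "R = {\<Sum>x\<in>S. c x *\<^sub>R x | c. \<forall>x\<in>S. 0 \<le> c x}"
  have "S \<subseteq> R"
  proof
    fix y assume "y \<in> S"
    have "(\<Sum>x\<in>S. (if x = y then 1 else 0) *\<^sub>R x) = (\<Sum>x\<in>S. if x = y then x else 0)"
      by (rule sum.cong) auto
    then have "y = (\<Sum>x\<in>S. (if x = y then 1 else 0) *\<^sub>R x)"
      using assms(1) \<open>y \<in> S\<close> by simp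
    then show "y \<in> R" unfolding R_def by force
  qed
  moreover have "convex_cone R"
    unfolding convex_cone_iff
  proof (intro conjI ballI allI impI)
    show "0 \<in> R" unfolding R_def by (rule CollectI, rule exI[of _ "\<lambda>_. 0"]) simp
  next
    fix y z assume "y \<in> R" "z \<in> R"
    then obtain c c' where "y = (\<Sum>x\<in>S. c x *\<^sub>R x)" "\<forall>x\<in>S. 0 \<le> c x"
      "z = (\<Sum>x\<in>S. c' x *\<^sub>R x)" "\<forall>x\<in>S. 0 \<le> c' x" unfolding R_def by blast
    then show "y + z \<in> R" unfolding R_def
      by (intro CollectI exI[of _ "\<lambda>x. c x + c' x"]) (simp add: scaleR_add_left sum.distrib)
  next
    fix y and a :: real assume "y \<in> R" "0 \<le> a"
    then obtain c where "y = (\<Sum>x\<in>S. c x *\<^sub>R x)" "\<forall>x\<in>S. 0 \<le> c x" unfolding R_def by blast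
    then show "a *\<^sub>R y \<in> R" unfolding R_def using \<open>0 \<le> a\<close>
      by (intro CollectI exI[of _ "\<lambda>x. a * c x"]) (simp add: scaleR_sum_right)
  qed
  ultimately have "z \<in> R" using assms(2) hull_minimal by blast
  then show ?thesis using that unfolding R_def by blast
qed

lemma halfspace_nonneg_combination_eq_0:
  fixes S :: "'a::euclidean_space set"
  assumes gp: "in_general_position S" and "finite S"
    and "w \<noteq> 0" and half: "S \<subseteq> {x. 0 \<le> inner w x}"
    and nonneg: "\<And>x. x \<in> S \<Longrightarrow> 0 \<le> c x" and rel: "(\<Sum>x\<in>S. c x *\<^sub>R x) = 0"
    and "x \<in> S"
  shows "c x = 0"
proof (rule ccontr)
  assume "c x \<noteq> 0"
  define T where "T = {x\<in>S. c x \<noteq> 0}"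
  have "finite T" "T \<subseteq> S" "x \<in> T"
    using \<open>finite S\<close> \<open>x \<in> S\<close> \<open>c x \<noteq> 0\<close> by (auto simp: T_def)
  have "(\<Sum>y\<in>S. c y * inner w y) = inner w (\<Sum>y\<in>S. c y *\<^sub>R y)"
    by (simp add: inner_sum_right)
  also have "\<dots> = 0" by (simp add: rel)
  finally have "\<forall>y\<in>S. c y * inner w y = 0"
    using sum_nonneg_eq_0_iff[OF \<open>finite S\<close>, of "\<lambda>y. c y * inner w y"] nonneg half
    by (simp add: subset_iff)
  then have hyperplane: "T \<subseteq> {y. inner w y = 0}"
    by (auto simp: T_def)
  have "(\<Sum>y\<in>T. c y *\<^sub>R y) = 0"
    using rel sum.mono_neutral_left[OF \<open>finite S\<close> \<open>T \<subseteq> S\<close>, of "\<lambda>y. c y *\<^sub>R y"]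
    by (simp add: T_def)
  then have "dependent T"
    using \<open>finite T\<close> \<open>x \<in> T\<close> \<open>c x \<noteq> 0\<close> by (auto simp: dependent_finite)
  then have "DIM('a) < card T"
    using gp \<open>finite T\<close> \<open>T \<subseteq> S\<close> by (meson in_general_position_def not_le)
  then obtain T' where "T' \<subseteq> T" "card T' = DIM('a)" "finite T'"
    by (meson less_imp_le obtain_subset_with_card_n)
  then have "independent T'"
    using gp \<open>T \<subseteq> S\<close> by (auto simp: in_general_position_def)
  then have "card T' \<le> dim {y. inner w y = 0}"
    using hyperplane \<open>T' \<subseteq> T\<close> by (meson independent_card_le_dim order_trans)
  then show False
    using \<open>card T' = DIM('a)\<close> dim_hyperplane[OF \<open>w \<noteq> 0\<close>] DIM_positive[where 'a='a]
    by linarith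
qed

lemma convex_cone_hull_pointed:
  fixes S :: "'a::euclidean_space set"
  assumes "in_general_position S" and "finite S"
    and "w \<noteq> 0" and "S \<subseteq> {x. 0 \<le> inner w x}"
    and "z \<in> convex_cone hull S" and "- z \<in> convex_cone hull S"
  shows "z = 0"
proof -
  obtain c where c: "\<And>x. x \<in> S \<Longrightarrow> 0 \<le> c x" "z = (\<Sum>x\<in>S. c x *\<^sub>R x)"
    using convex_cone_hull_finite_nonneg_sum[OF \<open>finite S\<close> \<open>z \<in> _\<close>] by blast
  obtain c' where c': "\<And>x. x \<in> S \<Longrightarrow> 0 \<le> c' x" "- z = (\<Sum>x\<in>S. c' x *\<^sub>R x)"
    using convex_cone_hull_finite_nonneg_sum[OF \<open>finite S\<close> \<open>- z \<in> _\<close>] by blast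
  have "(\<Sum>x\<in>S. (c x + c' x) *\<^sub>R x) = (\<Sum>x\<in>S. c x *\<^sub>R x) + (\<Sum>x\<in>S. c' x *\<^sub>R x)"
    by (simp add: scaleR_add_left sum.distrib)
  also have "\<dots> = 0"
    by (simp flip: c(2) c'(2))
  finally have sum_eq_0: "(\<Sum>x\<in>S. (c x + c' x) *\<^sub>R x) = 0" .
  have "c x = 0" if "x \<in> S" for x
  proof -
    have "c x + c' x = 0"
      by (rule halfspace_nonneg_combination_eq_0[OF assms(1-4) _ sum_eq_0 that])
        (simp add: c(1) c'(1))
    then show ?thesis using c(1)[OF that] c'(1)[OF that] by linarith
  qed
  then show "z = 0"
    unfolding c(2) by (simp add: sum.neutral)
qed

lemma antipode_notin_convex_cone_hull:
  fixes W :: "pt set"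
  assumes "in_general_position W" and "finite W" and "\<not> balanced W"
    and "N \<subseteq> W" and "y \<in> sconv N"
  shows "- y \<notin> convex_cone hull W"
proof
  assume "- y \<in> convex_cone hull W"
  obtain v where "v \<noteq> 0" "W \<subseteq> closed_hemisphere v"
    using \<open>\<not> balanced W\<close> by (auto simp: balanced_def in_closed_hemisphere_def)
  then have "W \<subseteq> {x. 0 \<le> inner v x}"
    by (auto simp: closed_hemisphere_def)
  moreover have "y \<in> convex_cone hull W" "norm y = 1"
    using \<open>y \<in> sconv N\<close> hull_mono[OF \<open>N \<subseteq> W\<close>] by (auto simp: sconv_eq_convex_cone_hull)
  ultimately show False
    using convex_cone_hull_pointed[OF assms(1,2) \<open>v \<noteq> 0\<close>] \<open>- y \<in> _\<close> by fastforce
qed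

lemma nonneg_combination_in_convex_cone_hull:
  assumes "{a, b, c} \<subseteq> S" and "0 \<le> x" "0 \<le> y" "0 \<le> z"
  shows "x *\<^sub>R a + y *\<^sub>R b + z *\<^sub>R c \<in> convex_cone hull S"
  using assms by (intro convex_cone_hull_add convex_cone_hull_mul hull_inc) auto

lemma conic_combination_with_zero_coefficient:
  fixes a b c d y :: "'a::real_vector"
  assumes "0 < \<alpha>" "0 < \<beta>" "0 < \<gamma>" and rel: "\<alpha> *\<^sub>R a + \<beta> *\<^sub>R b + \<gamma> *\<^sub>R c + d = 0"
    and y: "y = A *\<^sub>R a + B *\<^sub>R b + C *\<^sub>R c"
  obtains ka kb kc kd where "0 \<le> ka" "0 \<le> kb" "0 \<le> kc" "0 \<le> kd"
    and "ka = 0 \<or> kb = 0 \<or> kc = 0 \<or> kd = 0"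
    and "y = ka *\<^sub>R a + kb *\<^sub>R b + kc *\<^sub>R c + kd *\<^sub>R d"
proof -
  \<comment> \<open>add \<open>t\<close> times the relation, \<open>t\<close> the least value making all coefficients nonnegative\<close>
  define t where "t = max 0 (max (- A / \<alpha>) (max (- B / \<beta>) (- C / \<gamma>)))"
  have "0 \<le> t" by (simp add: t_def)
  moreover have "- A \<le> t * \<alpha>"
    using pos_divide_le_eq[OF assms(1), of "- A" t] by (simp add: t_def le_max_iff_disj)
  moreover have "- B \<le> t * \<beta>"
    using pos_divide_le_eq[OF assms(2), of "- B" t] by (simp add: t_def le_max_iff_disj)
  moreover have "- C \<le> t * \<gamma>"
    using pos_divide_le_eq[OF assms(3), of "- C" t] by (simp add: t_def le_max_iff_disj)
  moreover have "t = 0 \<or> A + t * \<alpha> = 0 \<or> B + t * \<beta> = 0 \<or> C + t * \<gamma> = 0"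
    using assms(1-3) by (auto simp: t_def max_def)
  moreover have "y = (A + t * \<alpha>) *\<^sub>R a + (B + t * \<beta>) *\<^sub>R b + (C + t * \<gamma>) *\<^sub>R c + t *\<^sub>R d"
  proof -
    have "y = y + t *\<^sub>R (\<alpha> *\<^sub>R a + \<beta> *\<^sub>R b + \<gamma> *\<^sub>R c + d)"
      by (simp add: rel)
    then show ?thesis
      by (simp add: y algebra_simps)
  qed
  ultimately show ?thesis
    by (intro that[of "A + t * \<alpha>" "B + t * \<beta>" "C + t * \<gamma>" t]) auto
qed

lemma span_triple_UNIV_coordinates:
  assumes "span {a, b, c} = UNIV"
  obtains x y z where "v = x *\<^sub>R a + y *\<^sub>R b + z *\<^sub>R c"
proof -
  have "v \<in> span {a, b, c}" using assms by simp
  then obtain x y z where "v - x *\<^sub>R a - y *\<^sub>R b = z *\<^sub>R c"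
    by (auto simp: span_insert span_singleton)
  then show ?thesis
    using that[of x y z] by (simp add: algebra_simps)
qed

lemma in_general_position_span_triple:
  fixes S :: "pt set"
  assumes "in_general_position S" and "{a, b, c} \<subseteq> S" and "card {a, b, c} = 3"
  shows "span {a, b, c} = UNIV"
proof -
  have "independent {a, b, c}"
    using assms by (auto simp: in_general_position_def)
  then show ?thesis
    using card_eq_dim[of "{a, b, c}" UNIV] assms(3) by auto
qed

lemma balanced_coefficient_neg:
  fixes a b c d :: pt
  assumes "balanced {a, b, c, d}" and "{a, b, c, d} \<subseteq> sphere 0 1"
    and "d = p *\<^sub>R a + q *\<^sub>R b + r *\<^sub>R c"
  shows "p < 0"
proof (rule ccontr)
  assume "\<not> p < 0"
  have "dim {b, c} \<le> card {b, c}"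
    by (rule dim_le_card) (auto intro: span_base)
  also have "\<dots> < DIM(pt)"
    by (cases "b = c") auto
  finally have "dim {b, c} < DIM(pt)" .
  then obtain w0 where "w0 \<noteq> 0" "\<And>x. x \<in> span {b, c} \<Longrightarrow> orthogonal w0 x"
    using orthogonal_to_subspace_exists by blast
  then have "inner w0 b = 0" "inner w0 c = 0"
    by (auto simp: orthogonal_def span_base)
  define w where "w = (if 0 \<le> inner w0 a then w0 else - w0)"
  have "w \<noteq> 0" "0 \<le> inner w a" "inner w b = 0" "inner w c = 0"
    using \<open>w0 \<noteq> 0\<close> \<open>inner w0 b = 0\<close> \<open>inner w0 c = 0\<close> by (auto simp: w_def)
  moreover have "inner w d = p * inner w a"
    using \<open>inner w b = 0\<close> \<open>inner w c = 0\<close> by (simp add: assms(3) inner_add_right)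
  ultimately have "{a, b, c, d} \<subseteq> closed_hemisphere w"
    using assms(2) \<open>\<not> p < 0\<close> by (auto simp: closed_hemisphere_def)
  then show False
    using assms(1) \<open>w \<noteq> 0\<close> by (auto simp: balanced_def in_closed_hemisphere_def)
qed

lemma balanced_antipodes_conic_combination:
  fixes a b c d :: pt
  assumes span: "span {a, b, c} = UNIV" and bal: "balanced {a, b, c, d}"
    and unit: "{a, b, c, d} \<subseteq> sphere 0 1"
  obtains ka kb kc kd where "0 \<le> ka" "0 \<le> kb" "0 \<le> kc" "0 \<le> kd"
    and "ka = 0 \<or> kb = 0 \<or> kc = 0 \<or> kd = 0"
    and "y = ka *\<^sub>R (- a) + kb *\<^sub>R (- b) + kc *\<^sub>R (- c) + kd *\<^sub>R (- d)"
proof -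
  obtain p q r where d: "d = p *\<^sub>R a + q *\<^sub>R b + r *\<^sub>R c"
    using span_triple_UNIV_coordinates[OF span] .
  have "0 < - p"
    using balanced_coefficient_neg[OF bal unit d] by simp
  moreover have "0 < - q"
    using balanced_coefficient_neg[of b a c d q p r] bal unit
    by (simp add: insert_commute d add_ac)
  moreover have "0 < - r"
    using balanced_coefficient_neg[of c a b d r p q] bal unit
    by (simp add: insert_commute d add_ac)
  moreover have "(- p) *\<^sub>R (- a) + (- q) *\<^sub>R (- b) + (- r) *\<^sub>R (- c) + - d = 0"
    using d by simp
  moreover obtain A B C where "y = A *\<^sub>R a + B *\<^sub>R b + C *\<^sub>R c"
    using span_triple_UNIV_coordinates[OF span] .
  then have "y = (- A) *\<^sub>R (- a) + (- B) *\<^sub>R (- b) + (- C) *\<^sub>R (- c)"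
    by simp
  ultimately show ?thesis
    using that by (rule conic_combination_with_zero_coefficient)
qed

lemma nonneg_combination_in_stri:
  assumes "norm v = 1" and "v = x *\<^sub>R a + y *\<^sub>R b + z *\<^sub>R c" and "0 \<le> x" "0 \<le> y" "0 \<le> z"
  shows "v \<in> stri a b c"
  using assms nonneg_combination_in_convex_cone_hull[of a b c "{a, b, c}" x y z]
  by (simp add: stri_def sconv_eq_convex_cone_hull)

lemma in_antipodal_triangles:
  fixes a b c d y :: pt
  assumes span: "span {a, b, c} = UNIV" and bal: "balanced {a, b, c, d}"
    and unit: "{a, b, c, d} \<subseteq> sphere 0 1" and "norm y = 1"
    and not_a: "- y \<notin> convex_cone hull {b, c, d}" and not_b: "- y \<notin> convex_cone hull {a, c, d}"
  shows "y \<in> stri (- a) (- b) (- c) \<union> stri (- a) (- b) (- d)"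
proof -
  obtain ka kb kc kd where k: "0 \<le> ka" "0 \<le> kb" "0 \<le> kc" "0 \<le> kd"
    "ka = 0 \<or> kb = 0 \<or> kc = 0 \<or> kd = 0"
    "y = ka *\<^sub>R (- a) + kb *\<^sub>R (- b) + kc *\<^sub>R (- c) + kd *\<^sub>R (- d)"
    using balanced_antipodes_conic_combination[OF span bal unit] by blast
  from k(5) consider "ka = 0" | "kb = 0" | "kc = 0" | "kd = 0" by blast
  then show ?thesis
  proof cases
    case 1
    then have "- y = kb *\<^sub>R b + kc *\<^sub>R c + kd *\<^sub>R d"
      using k(6) by simp
    then show ?thesis
      using not_a nonneg_combination_in_convex_cone_hull[of b c d _ kb kc kd] k(2-4) by simp
  next
    case 2
    then have "- y = ka *\<^sub>R a + kc *\<^sub>R c + kd *\<^sub>R d"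
      using k(6) by simp
    then show ?thesis
      using not_b nonneg_combination_in_convex_cone_hull[of a c d _ ka kc kd] k(1,3,4) by simp
  next
    case 3
    then have "y = ka *\<^sub>R (- a) + kb *\<^sub>R (- b) + kd *\<^sub>R (- d)"
      using k(6) by simp
    then show ?thesis
      using nonneg_combination_in_stri[OF \<open>norm y = 1\<close> _ k(1,2,4)] by blast
  next
    case 4
    then have "y = ka *\<^sub>R (- a) + kb *\<^sub>R (- b) + kc *\<^sub>R (- c)"
      using k(6) by simp
    then show ?thesis
      using nonneg_combination_in_stri[OF \<open>norm y = 1\<close> _ k(1-3)] by blast
  qed
qed

lemma sconv_subset_antipodal_triangles:
  fixes V :: "pt set" and a b c d :: pt
  assumes fin: "finite V" and gp: "in_general_position V" and unit: "V \<subseteq> sphere 0 1"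
    and "a \<in> V" "b \<in> V" "a \<noteq> b" and "c \<in> V - {a, b}" "d \<in> V - {a, b}"
    and ess_a: "\<not> balanced (V - {a})" and ess_b: "\<not> balanced (V - {b})"
    and bal: "balanced {a, b, c, d}"
  shows "sconv (V - {a, b}) \<subseteq> stri (- a) (- b) (- c) \<union> stri (- a) (- b) (- d)
       \<and> - a \<notin> sconv (V - {a, b}) \<and> - b \<notin> sconv (V - {a, b})"
proof -
  have antipode_a: "- y \<notin> convex_cone hull (V - {a})" if "y \<in> sconv (V - {a, b})" for y
    by (rule antipode_notin_convex_cone_hull[OF in_general_position_subset[OF gp] _ ess_a _ that])
      (use fin in auto)
  have antipode_b: "- y \<notin> convex_cone hull (V - {b})" if "y \<in> sconv (V - {a, b})" for y
    by (rule antipode_notin_convex_cone_hull[OF in_general_position_subset[OF gp] _ ess_b _ that])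
      (use fin in auto)
  have "- a \<notin> sconv (V - {a, b})" "- b \<notin> sconv (V - {a, b})"
    using antipode_b[of "- a"] antipode_a[of "- b"] \<open>a \<in> V\<close> \<open>b \<in> V\<close> \<open>a \<noteq> b\<close>
    by (auto intro: hull_inc)
  moreover have "y \<in> stri (- a) (- b) (- c) \<union> stri (- a) (- b) (- d)"
    if y: "y \<in> sconv (V - {a, b})" for y
  proof (rule in_antipodal_triangles[OF _ bal])
    show "span {a, b, c} = UNIV"
      using assms(4-7) by (intro in_general_position_span_triple[OF gp]) auto
    show "{a, b, c, d} \<subseteq> sphere 0 1" "norm y = 1"
      using assms(4-8) unit y by (auto simp: sconv_eq_convex_cone_hull)
    show "- y \<notin> convex_cone hull {b, c, d}" "- y \<notin> convex_cone hull {a, c, d}"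
      using antipode_a[OF y] antipode_b[OF y] hull_mono[of "{b, c, d}" "V - {a}"]
        hull_mono[of "{a, c, d}" "V - {b}"] assms(4-8) by auto
  qed
  ultimately show ?thesis by blast
qed

lemma spherical_polygon_span_triple:
  assumes "spherical_polygon n u" and "a < n" "b < n" "c < n" and "a \<noteq> b" "a \<noteq> c" "b \<noteq> c"
  shows "span {u a, u b, u c} = UNIV"
proof (rule ccontr)
  assume "span {u a, u b, u c} \<noteq> UNIV"
  then have "dim {u a, u b, u c} < DIM(pt)"
    using dim_eq_full dim_subset_UNIV le_neq_implies_less by blast
  then obtain w where "w \<noteq> 0" "\<And>x. x \<in> span {u a, u b, u c} \<Longrightarrow> orthogonal w x"
    using orthogonal_to_subspace_exists by blast
  then show False
    using assms unfolding spherical_polygon_def orthogonal_def by (metis insertCI span_base)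
qed

lemma spherical_polygon_card_triple:
  assumes "spherical_polygon n u" and "a < n" "b < n" "c < n" and "a \<noteq> b" "a \<noteq> c" "b \<noteq> c"
  shows "card {u a, u b, u c} = 3"
proof -
  have "dim {u a, u b, u c} = DIM(pt)"
    using dim_eq_full spherical_polygon_span_triple[OF assms] by blast
  then have "3 = dim {u a, u b, u c}"
    by simp
  also have "\<dots> \<le> card {u a, u b, u c}"
    by (rule dim_le_card) (auto intro: span_base)
  finally show ?thesis
    by (auto simp: card_insert_if split: if_splits)
qed

lemma spherical_polygon_inj_on:
  assumes "spherical_polygon n u"
  shows "inj_on u {..<n}"
proof (rule inj_onI, rule ccontr)
  fix a b assume "a \<in> {..<n}" "b \<in> {..<n}" "u a = u b" "a \<noteq> b"
  have "card {..<n} > card {a, b}"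
    using assms by (auto simp: spherical_polygon_def card_insert_if)
  then have "\<not> {..<n} \<subseteq> {a, b}"
    using card_mono[of "{a, b}" "{..<n}"] by auto
  then obtain c where "c < n" "c \<noteq> a" "c \<noteq> b"
    by auto
  then have "card {u a, u b, u c} = 3"
    using spherical_polygon_card_triple assms \<open>a \<in> _\<close> \<open>b \<in> _\<close> \<open>a \<noteq> b\<close> by auto
  then show False
    using \<open>u a = u b\<close> by (auto simp: card_insert_if split: if_splits)
qed

lemma spherical_polygon_in_general_position:
  assumes "spherical_polygon n u"
  shows "in_general_position (vertices n u)"
  unfolding in_general_position_def
proof (intro allI impI)
  fix T assume T: "T \<subseteq> vertices n u" "finite T \<and> card T \<le> DIM(pt)"
  have "card (vertices n u) = n" "n \<ge> 3"
    using assms spherical_polygon_inj_on[OF assms]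
    by (auto simp: vertices_def card_image spherical_polygon_def)
  then have "3 - card T \<le> card (vertices n u - T)"
    using T by (simp add: card_Diff_subset finite_subset)
  then obtain R where R: "R \<subseteq> vertices n u - T" "card R = 3 - card T" "finite R"
    by (rule obtain_subset_with_card_n)
  have "T \<inter> R = {}"
    using R(1) by blast
  then have "card (T \<union> R) = 3"
    using T R(2,3) by (simp add: card_Un_disjoint)
  then obtain x y z where xyz: "T \<union> R = {x, y, z}" "x \<noteq> y" "y \<noteq> z" "x \<noteq> z"
    by (auto simp: card_3_iff)
  have "{x, y, z} \<subseteq> u ` {..<n}"
    using T(1) R(1) unfolding xyz(1)[symmetric] vertices_def by blast
  then obtain a b c where "a < n" "b < n" "c < n" "x = u a" "y = u b" "z = u c"
    by (metis insert_subset image_iff lessThan_iff)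
  then have "span {x, y, z} = UNIV"
    using spherical_polygon_span_triple[OF assms] xyz(2-4) by blast
  then have "independent {x, y, z}"
    using card_eq_dim[of "{x, y, z}" UNIV] \<open>card (T \<union> R) = 3\<close> xyz(1) by simp
  then have "independent (T \<union> R)"
    using xyz(1) by simp
  then show "independent T"
    using independent_mono by blast
qed

theorem lemma8:
  fixes n :: nat and u :: "nat \<Rightarrow> real ^ 3" and i j k l :: nat
  assumes "spherical_polygon n u" and "n \<ge> 7"
    and "balanced (vertices n u)"
    and "\<not> self_intersecting n u" and "\<not> antipodal_intersecting n u"
    and "i < n" and "j < n" and "i \<noteq> j"
    and "\<forall>m<n. essential n u m \<longleftrightarrow> m = i \<or> m = j"
    and "k < n" and "l < n" and "\<not> essential n u k" and "\<not> essential n u l"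
    and "balanced {u i, u j, u k, u l}"
  shows "sconv (nonessential_vertices n u)
           \<subseteq> stri (- u i) (- u j) (- u k) \<union> stri (- u i) (- u j) (- u l)
         \<and> - u i \<notin> sconv (nonessential_vertices n u)
         \<and> - u j \<notin> sconv (nonessential_vertices n u)"
proof -
  have inj: "inj_on u {..<n}"
    using spherical_polygon_inj_on[OF assms(1)] .
  have "nonessential_vertices n u = vertices n u - {u i, u j}"
    using assms(6-9) inj_onD[OF inj]
    by (auto simp: nonessential_vertices_def vertices_def)
  moreover have "vertices n u \<subseteq> sphere 0 1"
    using assms(1) by (auto simp: vertices_def spherical_polygon_def)
  moreover have "u i \<noteq> u j" "u k \<in> vertices n u - {u i, u j}" "u l \<in> vertices n u - {u i, u j}"
    using assms(6-13) inj_onD[OF inj] by (auto simp: vertices_def)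
  moreover have "\<not> balanced (vertices n u - {u i})" "\<not> balanced (vertices n u - {u j})"
    using assms(6,7,9) by (auto simp: essential_def)
  ultimately show ?thesis
    using sconv_subset_antipodal_triangles[of "vertices n u" "u i" "u j" "u k" "u l"]
      spherical_polygon_in_general_position[OF assms(1)] assms(6,7,14)
    by (simp add: vertices_def)
qed

end
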